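(* Let $(P,Q)$ be a quasi-projection pair on a Hilbert $C^*$-module $H$, and let $H_5=\overline{\mathcal{R}(PQ(I-P))}$ and $H_6=\overline{\mathcal{R}((I-P)QP)}$. Then the following are equivalent: (i) $Q=Q^*$; (ii) $H_5=\{0\}$; (iii) $H_6=\{0\}$.
   Context: $H$ is a Hilbert module over a $C^*$-algebra, $\mathcal{L}(H)$ the adjointable operators. A quasi-projection pair is $(P,Q)$ with $P\in\mathcal{L}(H)$ a projection (self-adjoint idempotent), $Q\in\mathcal{L}(H)$ an idempotent, such that $PQ^*P=PQP$, $PQ^*(I-P)=-PQ(I-P)$, $(I-P)Q^*(I-P)=(I-P)Q(I-P)$; equivalently $Q^*=(2P-I)Q(2P-I)$. *)

theory Defs
  imports "HOL-Analysis.Analysis"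
begin

text \<open>A C*-algebra: a real Banach algebra (not necessarily unital) together with a
complex scalar multiplication sc extending the real one, and an involution st
satisfying the C*-identity.\<close>

definition cstar_algebra ::
  "(complex \<Rightarrow> 'a::{banach,real_normed_algebra} \<Rightarrow> 'a) \<Rightarrow> ('a \<Rightarrow> 'a) \<Rightarrow> bool" where
  "cstar_algebra sc st \<longleftrightarrow>
     (\<forall>r x. sc (complex_of_real r) x = r *\<^sub>R x) \<and>
     (\<forall>c x y. sc c (x + y) = sc c x + sc c y) \<and>
     (\<forall>c d x. sc (c + d) x = sc c x + sc d x) \<and>
     (\<forall>c d x. sc (c * d) x = sc c (sc d x)) \<and>
     (\<forall>c x. norm (sc c x) = cmod c * norm x) \<and>
     (\<forall>c x y. sc c (x * y) = sc c x * y \<and> sc c (x * y) = x * sc c y) \<and>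
     (\<forall>x. st (st x) = x) \<and>
     (\<forall>x y. st (x + y) = st x + st y) \<and>
     (\<forall>c x. st (sc c x) = sc (cnj c) (st x)) \<and>
     (\<forall>x y. st (x * y) = st y * st x) \<and>
     (\<forall>x. norm (st x * x) = (norm x)\<^sup>2)"

text \<open>A (right) Hilbert C*-module over the C*-algebra (sc, st): a complex vector space
(scalar multiplication smH) with a right action act of the algebra and an algebra-valued
inner product ip, linear in the second variable, whose norm is the one induced by ip and
which is complete (class banach).\<close>

definition hilbert_cstar_module ::
  "(complex \<Rightarrow> 'a::{banach,real_normed_algebra} \<Rightarrow> 'a) \<Rightarrow> ('a \<Rightarrow> 'a) \<Rightarrow>
   (complex \<Rightarrow> 'm::banach \<Rightarrow> 'm) \<Rightarrow> ('m \<Rightarrow> 'a \<Rightarrow> 'm) \<Rightarrow> ('m \<Rightarrow> 'm \<Rightarrow> 'a) \<Rightarrow> bool" where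
  "hilbert_cstar_module sc st smH act ip \<longleftrightarrow>
     cstar_algebra sc st \<and>
     (\<forall>r x. smH (complex_of_real r) x = r *\<^sub>R x) \<and>
     (\<forall>c x y. smH c (x + y) = smH c x + smH c y) \<and>
     (\<forall>c d x. smH (c + d) x = smH c x + smH d x) \<and>
     (\<forall>c d x. smH (c * d) x = smH c (smH d x)) \<and>
     (\<forall>x y a. act (x + y) a = act x a + act y a) \<and>
     (\<forall>x a b. act x (a + b) = act x a + act x b) \<and>
     (\<forall>x a b. act (act x a) b = act x (a * b)) \<and>
     (\<forall>c x a. smH c (act x a) = act (smH c x) a \<and> smH c (act x a) = act x (sc c a)) \<and>
     (\<forall>x y z. ip x (y + z) = ip x y + ip x z) \<and>
     (\<forall>c x y. ip x (smH c y) = sc c (ip x y)) \<and>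
     (\<forall>x y a. ip x (act y a) = ip x y * a) \<and>
     (\<forall>x y. ip y x = st (ip x y)) \<and>
     (\<forall>x. \<exists>b. ip x x = st b * b) \<and>
     (\<forall>x. ip x x = 0 \<longrightarrow> x = 0) \<and>
     (\<forall>x. norm x = sqrt (norm (ip x x)))"

definition adjointable :: "('m \<Rightarrow> 'm \<Rightarrow> 'a) \<Rightarrow> ('m \<Rightarrow> 'm) \<Rightarrow> bool" where
  "adjointable ip T \<longleftrightarrow> (\<exists>S. \<forall>x y. ip (T x) y = ip x (S y))"

definition adjoint :: "('m \<Rightarrow> 'm \<Rightarrow> 'a) \<Rightarrow> ('m \<Rightarrow> 'm) \<Rightarrow> ('m \<Rightarrow> 'm)" where
  "adjoint ip T = (SOME S. \<forall>x y. ip (T x) y = ip x (S y))"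

definition is_projection :: "('m \<Rightarrow> 'm \<Rightarrow> 'a) \<Rightarrow> ('m \<Rightarrow> 'm) \<Rightarrow> bool" where
  "is_projection ip P \<longleftrightarrow> adjointable ip P \<and> P \<circ> P = P \<and> adjoint ip P = P"

definition is_idempotent :: "('m \<Rightarrow> 'm \<Rightarrow> 'a) \<Rightarrow> ('m \<Rightarrow> 'm) \<Rightarrow> bool" where
  "is_idempotent ip Q \<longleftrightarrow> adjointable ip Q \<and> Q \<circ> Q = Q"

definition quasi_projection_pair ::
  "('m::ab_group_add \<Rightarrow> 'm \<Rightarrow> 'a) \<Rightarrow> ('m \<Rightarrow> 'm) \<Rightarrow> ('m \<Rightarrow> 'm) \<Rightarrow> bool" where
  "quasi_projection_pair ip P Q \<longleftrightarrow>
     is_projection ip P \<and> is_idempotent ip Q \<and>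
     (let Qs = adjoint ip Q; J = (\<lambda>x. x - P x) in
        P \<circ> Qs \<circ> P = P \<circ> Q \<circ> P \<and>
        P \<circ> Qs \<circ> J = (\<lambda>x. - P (Q (J x))) \<and>
        J \<circ> Qs \<circ> J = J \<circ> Q \<circ> J)"

end

theory Submission
  imports Defs
begin

(* Write J = I - P. The three quasi-projection identities say that Q* and Q have the
   same diagonal blocks PQP, JQJ, while their off-diagonal blocks differ by a sign:
   PQ*J = -PQJ, and, taking adjoints, JQ*P = -JQP. Hence Q = Q* exactly when both
   off-diagonal blocks vanish. Moreover JQP is the adjoint of PQ*J = -PQJ, so PQJ = 0
   iff JQP = 0. *)

definition adjoint_pair :: "('m \<Rightarrow> 'm \<Rightarrow> 'a) \<Rightarrow> ('m \<Rightarrow> 'm) \<Rightarrow> ('m \<Rightarrow> 'm) \<Rightarrow> bool" where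
  "adjoint_pair ip T S \<longleftrightarrow> (\<forall>x y. ip (T x) y = ip x (S y))"

lemma adjoint_pair_adjoint:
  assumes "adjointable ip T"
  shows "adjoint_pair ip T (adjoint ip T)"
  using assms unfolding adjointable_def adjoint_def adjoint_pair_def by (rule someI_ex)

lemma adjoint_pair_comp:
  "adjoint_pair ip T S \<Longrightarrow> adjoint_pair ip T' S' \<Longrightarrow> adjoint_pair ip (T \<circ> T') (S' \<circ> S)"
  by (simp add: adjoint_pair_def)

lemma eq_if_blocks_eq:
  fixes P A B :: "'m::ab_group_add \<Rightarrow> 'm"
  assumes "Modules.additive A" and "Modules.additive B"
    and "P \<circ> A \<circ> P = P \<circ> B \<circ> P"
    and "P \<circ> A \<circ> (\<lambda>x. x - P x) = P \<circ> B \<circ> (\<lambda>x. x - P x)"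
    and "(\<lambda>x. x - P x) \<circ> A \<circ> P = (\<lambda>x. x - P x) \<circ> B \<circ> P"
    and "(\<lambda>x. x - P x) \<circ> A \<circ> (\<lambda>x. x - P x) = (\<lambda>x. x - P x) \<circ> B \<circ> (\<lambda>x. x - P x)"
  shows "A = B"
proof
  fix x
  have split: "C x = P (C (P x)) + (C (P x) - P (C (P x)))
                 + P (C (x - P x)) + (C (x - P x) - P (C (x - P x)))" if "Modules.additive C" for C
    using additive.diff[OF that, of x "P x"] by simp
  show "A x = B x"
    using split[OF assms(1)] split[OF assms(2)] assms(3-6) by (simp add: fun_eq_iff)
qed

lemma closure_range_eq_zero_iff:
  "closure (range f) = {0::'b::{t1_space,zero}} \<longleftrightarrow> (\<forall>x. f x = 0)"
proof
  assume "closure (range f) = {0}"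
  then show "\<forall>x. f x = 0"
    using closure_subset[of "range f"] by auto
next
  assume "\<forall>x. f x = 0"
  then have "range f = {0}" by auto
  then show "closure (range f) = {0}" by simp
qed

locale definite_hermitian_form =
  fixes ip :: "'m::ab_group_add \<Rightarrow> 'm \<Rightarrow> 'a::ab_group_add" and st :: "'a \<Rightarrow> 'a"
  assumes ip_add_right: "ip x (y + z) = ip x y + ip x z"
    and ip_sym: "ip y x = st (ip x y)"
    and st_st: "st (st a) = a"
    and st_add: "st (a + b) = st a + st b"
    and ip_self_eq_zero: "ip x x = 0 \<Longrightarrow> x = 0"
begin

lemma additive_ip_right: "Modules.additive (ip x)"
  by unfold_locales (rule ip_add_right)

lemma additive_ip_left: "Modules.additive (\<lambda>x. ip x y)"
  by unfold_locales (metis ip_sym ip_add_right st_add)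

lemmas ip_diff_right = additive.diff[OF additive_ip_right]
  and ip_diff_left = additive.diff[OF additive_ip_left]
  and ip_zero_right = additive.zero[OF additive_ip_right]
  and ip_zero_left = additive.zero[OF additive_ip_left]

lemma eq_if_ip_right_eq: "(\<And>z. ip z u = ip z v) \<Longrightarrow> u = v"
  using ip_self_eq_zero[of "u - v"] by (simp add: ip_diff_right)

lemma adjoint_pair_sym: "adjoint_pair ip T S \<Longrightarrow> adjoint_pair ip S T"
  unfolding adjoint_pair_def by (metis ip_sym st_st)

lemma adjoint_pair_additive: "adjoint_pair ip T S \<Longrightarrow> Modules.additive S"
  unfolding adjoint_pair_def
  by unfold_locales (rule eq_if_ip_right_eq, metis ip_add_right)

lemma adjoint_pair_complement:
  "adjoint_pair ip P P \<Longrightarrow> adjoint_pair ip (\<lambda>x. x - P x) (\<lambda>x. x - P x)"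
  by (simp add: adjoint_pair_def ip_diff_left ip_diff_right)

lemma adjoint_pair_vanishes_iff:
  assumes "adjoint_pair ip T S"
  shows "(\<forall>x. T x = 0) \<longleftrightarrow> (\<forall>y. S y = 0)"
proof -
  have "S y = 0" if "adjoint_pair ip T S" "\<forall>x. T x = 0" for T S y
  proof (rule eq_if_ip_right_eq)
    fix z
    have "ip z (S y) = ip (T z) y"
      using that(1) by (simp add: adjoint_pair_def)
    then show "ip z (S y) = ip z 0"
      using that(2) by (simp add: ip_zero_left ip_zero_right)
  qed
  then show ?thesis
    using assms adjoint_pair_sym by blast
qed

end

locale quasi_projection = definite_hermitian_form ip st
  for ip :: "'m::real_vector \<Rightarrow> 'm \<Rightarrow> 'a::ab_group_add" and st +
  fixes P Q Qs :: "'m \<Rightarrow> 'm"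
  assumes P_self_adjoint: "adjoint_pair ip P P"
    and Q_adjoint: "adjoint_pair ip Q Qs"
    and PQsP_eq: "P \<circ> Qs \<circ> P = P \<circ> Q \<circ> P"
    and PQsJ_eq: "P \<circ> Qs \<circ> (\<lambda>x. x - P x) = (\<lambda>x. - P (Q (x - P x)))"
    and JQsJ_eq: "(\<lambda>x. x - P x) \<circ> Qs \<circ> (\<lambda>x. x - P x) = (\<lambda>x. x - P x) \<circ> Q \<circ> (\<lambda>x. x - P x)"
begin

lemma PQJ_vanishes_iff_JQP_vanishes:
  "(\<forall>x. P (Q (x - P x)) = 0) \<longleftrightarrow> (\<forall>x. Q (P x) - P (Q (P x)) = 0)"
proof -
  have "adjoint_pair ip (P \<circ> Qs \<circ> (\<lambda>x. x - P x)) ((\<lambda>x. x - P x) \<circ> (Q \<circ> P))"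
    using adjoint_pair_comp[OF adjoint_pair_comp[OF P_self_adjoint adjoint_pair_sym[OF Q_adjoint]]
        adjoint_pair_complement[OF P_self_adjoint]] .
  then have "adjoint_pair ip (\<lambda>x. - P (Q (x - P x))) (\<lambda>x. Q (P x) - P (Q (P x)))"
    unfolding PQsJ_eq by (simp add: comp_def)
  from adjoint_pair_vanishes_iff[OF this] show ?thesis
    by simp
qed

lemma PQJ_vanishes_if_self_adjoint:
  assumes "Q = Qs"
  shows "P (Q (x - P x)) = 0"
proof -
  have "P (Q (x - P x)) = - P (Q (x - P x))"
    using fun_cong[OF PQsJ_eq, of x] assms by simp
  then have "(2::real) *\<^sub>R P (Q (x - P x)) = 0"
    by (metis add.right_inverse scaleR_2)
  then show ?thesis
    by simp
qed

lemma self_adjoint_if_PQJ_vanishes: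
  assumes PQJ: "\<And>x. P (Q (x - P x)) = 0"
  shows "Q = Qs"
proof (rule eq_if_blocks_eq)
  show "Modules.additive Q" "Modules.additive Qs"
    using adjoint_pair_additive adjoint_pair_sym Q_adjoint by blast+
  have "adjoint_pair ip (P \<circ> Q \<circ> (\<lambda>x. x - P x)) ((\<lambda>x. x - P x) \<circ> (Qs \<circ> P))"
    using adjoint_pair_comp[OF adjoint_pair_comp[OF P_self_adjoint Q_adjoint]
        adjoint_pair_complement[OF P_self_adjoint]] .
  from adjoint_pair_vanishes_iff[OF this] have "\<forall>x. Qs (P x) - P (Qs (P x)) = 0"
    using PQJ by simp
  moreover have "\<forall>x. Q (P x) - P (Q (P x)) = 0"
    using PQJ_vanishes_iff_JQP_vanishes PQJ by simp
  ultimately show "(\<lambda>x. x - P x) \<circ> Q \<circ> P = (\<lambda>x. x - P x) \<circ> Qs \<circ> P"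
    by (simp add: fun_eq_iff)
  show "P \<circ> Q \<circ> (\<lambda>x. x - P x) = P \<circ> Qs \<circ> (\<lambda>x. x - P x)"
    using PQsJ_eq PQJ by (simp add: fun_eq_iff)
  show "P \<circ> Q \<circ> P = P \<circ> Qs \<circ> P"
    using PQsP_eq by (rule sym)
  show "(\<lambda>x. x - P x) \<circ> Q \<circ> (\<lambda>x. x - P x) = (\<lambda>x. x - P x) \<circ> Qs \<circ> (\<lambda>x. x - P x)"
    using JQsJ_eq by (rule sym)
qed

end

lemma hilbert_cstar_module_definite_hermitian_form:
  assumes "hilbert_cstar_module sc st smH act ip"
  shows "definite_hermitian_form ip st"
proof -
  have "cstar_algebra sc st \<and> (\<forall>x y z. ip x (y + z) = ip x y + ip x z)
      \<and> (\<forall>x y. ip y x = st (ip x y)) \<and> (\<forall>x. ip x x = 0 \<longrightarrow> x = 0)"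
    using assms unfolding hilbert_cstar_module_def by (elim conjE) (intro conjI; assumption)
  moreover have "(\<forall>a. st (st a) = a) \<and> (\<forall>a b. st (a + b) = st a + st b)" if "cstar_algebra sc st"
    using that unfolding cstar_algebra_def by (elim conjE) (intro conjI; assumption)
  ultimately show ?thesis
    by unfold_locales meson+
qed

lemma quasi_projection_pairD:
  assumes "quasi_projection_pair ip P Q"
  shows "adjoint_pair ip P P" "adjoint_pair ip Q (adjoint ip Q)"
    and "P \<circ> adjoint ip Q \<circ> P = P \<circ> Q \<circ> P"
    and "P \<circ> adjoint ip Q \<circ> (\<lambda>x. x - P x) = (\<lambda>x. - P (Q (x - P x)))"
    and "(\<lambda>x. x - P x) \<circ> adjoint ip Q \<circ> (\<lambda>x. x - P x) = (\<lambda>x. x - P x) \<circ> Q \<circ> (\<lambda>x. x - P x)"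
  using assms adjoint_pair_adjoint[of ip P] adjoint_pair_adjoint[of ip Q]
  by (simp_all add: quasi_projection_pair_def is_projection_def is_idempotent_def Let_def)

theorem lemma2p12:
  fixes sc :: "complex \<Rightarrow> 'a::{banach,real_normed_algebra} \<Rightarrow> 'a"
    and st :: "'a \<Rightarrow> 'a"
    and smH :: "complex \<Rightarrow> 'm::banach \<Rightarrow> 'm"
    and act :: "'m \<Rightarrow> 'a \<Rightarrow> 'm"
    and ip :: "'m \<Rightarrow> 'm \<Rightarrow> 'a"
    and P Q :: "'m \<Rightarrow> 'm"
  assumes "hilbert_cstar_module sc st smH act ip"
    and "quasi_projection_pair ip P Q"
  shows "(Q = adjoint ip Q \<longleftrightarrow> closure (range (\<lambda>x. P (Q (x - P x)))) = {0})
       \<and> (Q = adjoint ip Q \<longleftrightarrow> closure (range (\<lambda>x. Q (P x) - P (Q (P x)))) = {0})"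
proof -
  interpret definite_hermitian_form ip st
    using assms(1) by (rule hilbert_cstar_module_definite_hermitian_form)
  interpret quasi_projection ip st P Q "adjoint ip Q"
    using quasi_projection_pairD[OF assms(2)] by unfold_locales
  show ?thesis
    unfolding closure_range_eq_zero_iff
    using PQJ_vanishes_iff_JQP_vanishes PQJ_vanishes_if_self_adjoint
      self_adjoint_if_PQJ_vanishes by blast
qed

end
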